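(* Let $X$ be a space such that every countable family of closed non-Lindelöf subsets of $X$ has non-Lindelöf intersection. Let $\kappa$ be the linear Lindelöf number of $X$, and let $Y$ be a regular $[\aleph_0,\kappa]$-compact space with $G_\delta$ points. Then $\mathsf{EC}(X,Y)$ holds.
   Context: All spaces are Hausdorff and maps continuous. The linear Lindelöf number of $X$ is the least $\kappa$ such that every cover of $X$ by open sets linearly ordered by inclusion has a subcover of cardinality $\le\kappa$. A space is $[\aleph_0,\kappa]$-compact if every open cover of cardinality $\le\kappa$ has a countable subcover. For a non-Lindelöf space $X$, $\mathsf{EC}(X,Y)$ means: for every continuous $f:X\to Y$ there is a Lindelöf $Z\subset X$ with $f(X\setminus Z)$ a singleton (for Lindelöf $X$ it is regarded as trivially true). *)

theory Defs
  imports "HOL-Analysis.Analysis" "HOL-Library.Equipollence"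
begin

definition Lindelof_in :: "'a topology \<Rightarrow> 'a set \<Rightarrow> bool" where
  "Lindelof_in X Z \<longleftrightarrow> Z \<subseteq> topspace X \<and> Lindelof_space (subtopology X Z)"

definition linear_cover_bound :: "'a topology \<Rightarrow> 'k set \<Rightarrow> bool" where
  "linear_cover_bound X K \<longleftrightarrow>
     (\<forall>\<U>. (\<forall>U\<in>\<U>. openin X U) \<and> \<Union>\<U> = topspace X \<and>
           (\<forall>A\<in>\<U>. \<forall>B\<in>\<U>. A \<subseteq> B \<or> B \<subseteq> A)
        \<longrightarrow> (\<exists>\<V>. \<V> \<subseteq> \<U> \<and> \<Union>\<V> = topspace X \<and> \<V> \<lesssim> K))"

text \<open>The cardinality of K is the linear Lindelof number of X: K is a bound, and
  K is below every bound (bounds are compared among sets of type 'a set set, which is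
  enough since every subcover is such a set).\<close>
definition is_linear_Lindelof_number :: "'a topology \<Rightarrow> 'k set \<Rightarrow> bool" where
  "is_linear_Lindelof_number X K \<longleftrightarrow>
     linear_cover_bound X K \<and>
     (\<forall>K' :: 'a set set. linear_cover_bound X K' \<longrightarrow> K \<lesssim> K')"

definition aleph0_kappa_compact :: "'b topology \<Rightarrow> 'k set \<Rightarrow> bool" where
  "aleph0_kappa_compact Y K \<longleftrightarrow>
     (\<forall>\<U>. (\<forall>U\<in>\<U>. openin Y U) \<and> \<Union>\<U> = topspace Y \<and> \<U> \<lesssim> K
        \<longrightarrow> (\<exists>\<V>. countable \<V> \<and> \<V> \<subseteq> \<U> \<and> \<Union>\<V> = topspace Y))"

definition G_delta_points :: "'b topology \<Rightarrow> bool" where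
  "G_delta_points Y \<longleftrightarrow> (\<forall>y\<in>topspace Y. gdelta_in Y {y})"

definition EC :: "'a topology \<Rightarrow> 'b topology \<Rightarrow> bool" where
  "EC X Y \<longleftrightarrow> (\<not> Lindelof_space X \<longrightarrow>
     (\<forall>f. continuous_map X Y f \<longrightarrow>
        (\<exists>Z. Lindelof_in X Z \<and> (\<exists>y. f ` (topspace X - Z) = {y}))))"

end

theory Submission
  imports Defs
begin

text \<open>Call \<open>y\<close> an essential value of \<open>f\<close> if the preimage of every closed neighbourhood
  of \<open>y\<close> is non-Lindelof. For an essential value \<open>y\<close> and an open \<open>V \<ni> y\<close>, regularity gives
  an open \<open>W \<ni> y\<close> whose closure misses \<open>Y - V\<close>; the preimages of \<open>Y - V\<close> and of that
  closure are disjoint closed sets, so by the intersection hypothesis the first one is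
  Lindelof. As \<open>{y}\<close> is a \<open>G\<^sub>\<delta>\<close>, the preimage of \<open>Y - {y}\<close> is then Lindelof, and \<open>f\<close> is
  constant off it.

  An essential value exists. If some point has no Lindelof neighbourhood, its image is
  one. Otherwise Zorn's lemma yields a cover of \<open>X\<close> by a chain of open sets with
  non-Lindelof complements, which may be shrunk to at most \<open>\<kappa>\<close> members. By the
  intersection hypothesis every Lindelof set lies in a single member \<open>E\<close> of the chain,
  and \<open>[\<aleph>\<^sub>0,\<kappa>]\<close>-compactness of \<open>Y\<close> gives a common point of the closures of the sets
  \<open>f(X - E)\<close>; this point is essential.\<close>

lemma Lindelof_in_empty [simp]: "Lindelof_in X {}"
  unfolding Lindelof_in_def by (simp add: Lindelof_space_topspace_empty)

lemma Lindelof_in_topspace: "Lindelof_in X (topspace X) \<longleftrightarrow> Lindelof_space X"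
  unfolding Lindelof_in_def by simp

lemma Lindelof_in_Union:
  assumes "countable \<U>" "\<And>U. U \<in> \<U> \<Longrightarrow> Lindelof_in X U"
  shows "Lindelof_in X (\<Union>\<U>)"
  using assms Lindelof_space_Union[of \<U> X] unfolding Lindelof_in_def by blast

lemma Lindelof_in_Un:
  assumes "Lindelof_in X A" "Lindelof_in X B"
  shows "Lindelof_in X (A \<union> B)"
  using Lindelof_in_Union[of "{A, B}" X] assms by auto

lemma Lindelof_in_countable_subcover:
  assumes "Lindelof_in X L" "\<And>U. U \<in> \<U> \<Longrightarrow> openin X U" "L \<subseteq> \<Union>\<U>"
  obtains \<V> where "countable \<V>" "\<V> \<subseteq> \<U>" "L \<subseteq> \<Union>\<V>"
  using assms Lindelof_space_subtopology_subset[of L X] unfolding Lindelof_in_def by blast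

lemma Lindelof_in_closedin_subset:
  assumes "Lindelof_in X L" "closedin X F" "F \<subseteq> L"
  shows "Lindelof_in X F"
proof -
  have "closedin (subtopology X L) F"
    using assms closedin_subset_topspace by blast
  then have "Lindelof_space (subtopology (subtopology X L) F)"
    using assms(1) Lindelof_space_closedin_subtopology unfolding Lindelof_in_def by blast
  then show ?thesis
    using assms closedin_subset unfolding Lindelof_in_def
    by (simp add: subtopology_subtopology Int_absorb1)
qed

definition non_Lindelof_closed_countable_Inter :: "'a topology \<Rightarrow> bool" where
  "non_Lindelof_closed_countable_Inter X \<longleftrightarrow>
     (\<forall>\<F>. countable \<F> \<and> \<F> \<noteq> {} \<and> (\<forall>F\<in>\<F>. closedin X F \<and> \<not> Lindelof_in X F)
        \<longrightarrow> \<not> Lindelof_in X (\<Inter>\<F>))"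

lemma non_Lindelof_closed_countable_InterD:
  assumes "non_Lindelof_closed_countable_Inter X" "countable \<F>" "\<F> \<noteq> {}"
    and "\<And>F. F \<in> \<F> \<Longrightarrow> closedin X F \<and> \<not> Lindelof_in X F"
  shows "\<not> Lindelof_in X (\<Inter>\<F>)"
  using assms unfolding non_Lindelof_closed_countable_Inter_def by blast

definition has_Lindelof_nbhd :: "'a topology \<Rightarrow> 'a \<Rightarrow> bool" where
  "has_Lindelof_nbhd X x \<longleftrightarrow> (\<exists>G L. openin X G \<and> x \<in> G \<and> G \<subseteq> L \<and> Lindelof_in X L)"

definition essential_value :: "'a topology \<Rightarrow> 'b topology \<Rightarrow> ('a \<Rightarrow> 'b) \<Rightarrow> 'b \<Rightarrow> bool" where
  "essential_value X Y f y \<longleftrightarrow> y \<in> topspace Y \<and>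
     (\<forall>W. openin Y W \<and> y \<in> W \<longrightarrow> \<not> Lindelof_in X {x \<in> topspace X. f x \<in> Y closure_of W})"

definition non_Lindelof_complement_chain_cover :: "'a topology \<Rightarrow> 'a set set \<Rightarrow> bool" where
  "non_Lindelof_complement_chain_cover X \<C> \<longleftrightarrow>
     (\<forall>E\<in>\<C>. openin X E \<and> \<not> Lindelof_in X (topspace X - E)) \<and>
     (\<forall>A\<in>\<C>. \<forall>B\<in>\<C>. A \<subseteq> B \<or> B \<subseteq> A) \<and> \<Union>\<C> = topspace X"

lemma non_Lindelof_complement_chain_coverD:
  assumes "non_Lindelof_complement_chain_cover X \<C>"
  shows "\<And>E. E \<in> \<C> \<Longrightarrow> openin X E \<and> \<not> Lindelof_in X (topspace X - E)"
    and "\<And>A B. A \<in> \<C> \<Longrightarrow> B \<in> \<C> \<Longrightarrow> A \<subseteq> B \<or> B \<subseteq> A"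
    and "\<Union>\<C> = topspace X"
  using assms unfolding non_Lindelof_complement_chain_cover_def by auto

lemma Lindelof_in_preimage_outside_essential_value:
  assumes P: "non_Lindelof_closed_countable_Inter X" and reg: "regular_space Y"
    and f: "continuous_map X Y f" and y: "essential_value X Y f y"
    and V: "openin Y V" "y \<in> V"
  shows "Lindelof_in X {x \<in> topspace X. f x \<in> topspace Y - V}"
proof (rule ccontr)
  assume not_Lindelof: "\<not> ?thesis"
  have closed: "closedin Y (topspace Y - V)"
    using V by blast
  moreover have "y \<in> topspace Y - (topspace Y - V)"
    using y V unfolding essential_value_def by blast
  ultimately obtain W where W: "openin Y W" "y \<in> W" "disjnt (topspace Y - V) (Y closure_of W)"
    using reg unfolding regular_space by blast
  let ?A = "{x \<in> topspace X. f x \<in> topspace Y - V}"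
  let ?B = "{x \<in> topspace X. f x \<in> Y closure_of W}"
  have "closedin X ?A"
    using f closed by (rule closedin_continuous_map_preimage)
  moreover have "closedin X ?B"
    using f closedin_closure_of by (rule closedin_continuous_map_preimage)
  moreover have "\<not> Lindelof_in X ?B"
    using y W unfolding essential_value_def by blast
  moreover have "?A \<inter> ?B = {}"
    using W(3) closure_of_subset_topspace[of Y W] unfolding disjnt_def by auto
  ultimately have "\<not> Lindelof_in X (\<Inter>{?A, ?B})"
    using not_Lindelof by (intro non_Lindelof_closed_countable_InterD[OF P]) auto
  with \<open>?A \<inter> ?B = {}\<close> show False
    by simp
qed

lemma essential_value_constant_off_Lindelof:
  assumes P: "non_Lindelof_closed_countable_Inter X" and reg: "regular_space Y"
    and gd: "gdelta_in Y {y}" and f: "continuous_map X Y f" and nonL: "\<not> Lindelof_space X"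
    and y: "essential_value X Y f y"
  shows "\<exists>Z. Lindelof_in X Z \<and> f ` (topspace X - Z) = {y}"
proof -
  obtain \<T> where \<T>: "countable \<T>" "\<And>V. V \<in> \<T> \<Longrightarrow> openin Y V" "\<Inter>\<T> = {y}"
    using gd unfolding gdelta_in_alt intersection_of_def by blast
  define Z where "Z = {x \<in> topspace X. f x \<noteq> y}"
  have "Z = (\<Union>V\<in>\<T>. {x \<in> topspace X. f x \<in> topspace Y - V})"
    using \<T>(3) continuous_map_image_subset_topspace[OF f] unfolding Z_def by blast
  moreover have "Lindelof_in X {x \<in> topspace X. f x \<in> topspace Y - V}" if "V \<in> \<T>" for V
    using Lindelof_in_preimage_outside_essential_value[OF P reg f y] \<T> that by blast
  ultimately have Z: "Lindelof_in X Z"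
    using \<T>(1) by (auto intro: Lindelof_in_Union)
  then have "Z \<noteq> topspace X"
    using nonL Lindelof_in_topspace by metis
  then have "f ` (topspace X - Z) = {y}"
    unfolding Z_def by auto
  with Z show ?thesis by blast
qed

lemma essential_value_image_of_point_without_Lindelof_nbhd:
  assumes f: "continuous_map X Y f" and a: "a \<in> topspace X" and "\<not> has_Lindelof_nbhd X a"
  shows "essential_value X Y f (f a)"
  unfolding essential_value_def
proof (intro conjI allI impI notI)
  show "f a \<in> topspace Y"
    using f a by (simp add: continuous_map_def Pi_iff)
next
  fix W assume W: "openin Y W \<and> f a \<in> W"
    and L: "Lindelof_in X {x \<in> topspace X. f x \<in> Y closure_of W}"
  have "openin X {x \<in> topspace X. f x \<in> W}"
    using f W openin_continuous_map_preimage by blast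
  moreover have "{x \<in> topspace X. f x \<in> W} \<subseteq> {x \<in> topspace X. f x \<in> Y closure_of W}"
    using closure_of_subset[of W Y] W openin_subset by blast
  ultimately show False
    using assms L a W unfolding has_Lindelof_nbhd_def by blast
qed

lemma non_Lindelof_complement_countable_Union:
  assumes P: "non_Lindelof_closed_countable_Inter X" and nonL: "\<not> Lindelof_space X"
    and "countable \<V>" and \<V>: "\<And>E. E \<in> \<V> \<Longrightarrow> openin X E \<and> \<not> Lindelof_in X (topspace X - E)"
  shows "\<not> Lindelof_in X (topspace X - \<Union>\<V>)"
proof -
  \<comment> \<open>\<open>topspace X\<close> is included so that the family is nonempty also for \<open>\<V> = {}\<close>.\<close>
  let ?\<F> = "insert (topspace X) ((\<lambda>E. topspace X - E) ` \<V>)"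
  have "\<Inter>?\<F> = topspace X - \<Union>\<V>"
    by blast
  moreover have "\<forall>F\<in>?\<F>. closedin X F \<and> \<not> Lindelof_in X F"
    using \<V> nonL Lindelof_in_topspace by blast
  moreover have "countable ?\<F>"
    using \<open>countable \<V>\<close> by blast
  ultimately show ?thesis
    by (metis non_Lindelof_closed_countable_InterD[OF P] insert_not_empty)
qed

lemma chain_cover_member_contains_Lindelof_in:
  assumes P: "non_Lindelof_closed_countable_Inter X" and nonL: "\<not> Lindelof_space X"
    and \<C>: "non_Lindelof_complement_chain_cover X \<C>" and L: "Lindelof_in X L"
  shows "\<exists>E\<in>\<C>. L \<subseteq> E"
proof -
  note members = non_Lindelof_complement_chain_coverD(1)[OF \<C>]
    and chain = non_Lindelof_complement_chain_coverD(2)[OF \<C>]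
    and cover = non_Lindelof_complement_chain_coverD(3)[OF \<C>]
  have "L \<subseteq> \<Union>\<C>"
    using L cover unfolding Lindelof_in_def by blast
  then obtain \<V> where \<V>: "countable \<V>" "\<V> \<subseteq> \<C>" "L \<subseteq> \<Union>\<V>"
    using Lindelof_in_countable_subcover[OF L, of \<C>] members by blast
  have "\<not> Lindelof_in X (topspace X - \<Union>\<V>)"
    using non_Lindelof_complement_countable_Union[OF P nonL \<V>(1)] \<V>(2) members by blast
  then have "topspace X - \<Union>\<V> \<noteq> {}"
    by (metis Lindelof_in_empty)
  then obtain x where x: "x \<in> topspace X" "x \<notin> \<Union>\<V>"
    by blast
  then obtain E where E: "E \<in> \<C>" "x \<in> E"
    using cover by blast
  have "E' \<subseteq> E" if "E' \<in> \<V>" for E'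
    using chain[OF E(1), of E'] that \<V>(2) E(2) x(2) by blast
  with \<V>(3) E(1) show ?thesis
    by blast
qed

lemma common_closure_point_of_images_of_complements:
  assumes P: "non_Lindelof_closed_countable_Inter X" and nonL: "\<not> Lindelof_space X"
    and \<C>: "\<And>E. E \<in> \<C> \<Longrightarrow> openin X E \<and> \<not> Lindelof_in X (topspace X - E)"
    and f: "continuous_map X Y f" and card: "\<C> \<lesssim> K" and Y: "aleph0_kappa_compact Y K"
  shows "\<exists>y\<in>topspace Y. \<forall>E\<in>\<C>. y \<in> Y closure_of (f ` (topspace X - E))"
proof (rule ccontr)
  define D where "D E = Y closure_of (f ` (topspace X - E))" for E
  assume "\<not> ?thesis"
  then have uncovered: "\<forall>y\<in>topspace Y. \<exists>E\<in>\<C>. y \<notin> D E"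
    unfolding D_def by blast
  let ?\<U> = "(\<lambda>E. topspace Y - D E) ` \<C>"
  have "\<forall>U\<in>?\<U>. openin Y U" "\<Union>?\<U> = topspace Y" "?\<U> \<lesssim> K"
    using uncovered lepoll_trans[OF image_lepoll card] unfolding D_def by auto
  then obtain \<W> where \<W>: "countable \<W>" "\<W> \<subseteq> ?\<U>" "\<Union>\<W> = topspace Y"
    using Y unfolding aleph0_kappa_compact_def by meson
  then obtain \<V> where \<V>: "countable \<V>" "\<V> \<subseteq> \<C>" "\<W> = (\<lambda>E. topspace Y - D E) ` \<V>"
    using countable_subset_image by metis
  have "\<not> Lindelof_in X (topspace X - \<Union>\<V>)"
    using non_Lindelof_complement_countable_Union[OF P nonL \<V>(1)] \<V>(2) \<C> by blast
  then have "topspace X - \<Union>\<V> \<noteq> {}"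
    by (metis Lindelof_in_empty)
  then obtain x where x: "x \<in> topspace X" "x \<notin> \<Union>\<V>"
    by blast
  then have "f x \<in> \<Union>\<W>"
    using \<W>(3) f by (simp add: continuous_map_def Pi_iff)
  then obtain E where E: "E \<in> \<V>" "f x \<notin> D E"
    using \<V>(3) by blast
  have "f x \<in> f ` (topspace X - E)"
    using x E(1) by blast
  moreover have "f ` (topspace X - E) \<subseteq> topspace Y"
    using f by (auto simp: continuous_map_def Pi_iff)
  ultimately show False
    using E(2) closure_of_subset unfolding D_def by blast
qed

lemma essential_value_common_closure_point:
  assumes P: "non_Lindelof_closed_countable_Inter X" and nonL: "\<not> Lindelof_space X"
    and \<C>: "non_Lindelof_complement_chain_cover X \<C>" and f: "continuous_map X Y f"
    and y: "y \<in> topspace Y" "\<forall>E\<in>\<C>. y \<in> Y closure_of (f ` (topspace X - E))"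
  shows "essential_value X Y f y"
  unfolding essential_value_def
proof (intro conjI allI impI notI)
  fix W assume W: "openin Y W \<and> y \<in> W"
  assume "Lindelof_in X {x \<in> topspace X. f x \<in> Y closure_of W}"
  then obtain E where E: "E \<in> \<C>" "{x \<in> topspace X. f x \<in> Y closure_of W} \<subseteq> E"
    using chain_cover_member_contains_Lindelof_in[OF P nonL \<C>] by blast
  have "f ` (topspace X - E) \<subseteq> topspace Y - W"
    using E(2) closure_of_subset[of W Y] W openin_subset f
    by (fastforce simp: continuous_map_def Pi_iff)
  then have "Y closure_of (f ` (topspace X - E)) \<subseteq> topspace Y - W"
    using W by (intro closure_of_minimal) auto
  then show False
    using y E(1) W by blast
qed (use y in simp)

lemma non_Lindelof_complement_chain_cover_subset:
  assumes "non_Lindelof_complement_chain_cover X \<C>" "\<V> \<subseteq> \<C>" "\<Union>\<V> = topspace X"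
  shows "non_Lindelof_complement_chain_cover X \<V>"
  using assms unfolding non_Lindelof_complement_chain_cover_def by (simp add: subset_iff)

lemma non_Lindelof_complement_Un_Lindelof:
  assumes "openin X E" "\<not> Lindelof_in X (topspace X - E)" "Lindelof_in X L" "G \<subseteq> L"
  shows "\<not> Lindelof_in X (topspace X - (E \<union> G))"
proof
  assume "Lindelof_in X (topspace X - (E \<union> G))"
  then have "Lindelof_in X ((topspace X - (E \<union> G)) \<union> L)"
    using assms(3) by (rule Lindelof_in_Un)
  moreover have "closedin X (topspace X - E)"
    using assms(1) by (rule closedin_diff[OF closedin_topspace])
  moreover have "topspace X - E \<subseteq> (topspace X - (E \<union> G)) \<union> L"
    using assms(4) by blast
  ultimately show False
    using assms(2) Lindelof_in_closedin_subset by blast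
qed

lemma Lindelof_in_open_superset_in_Lindelof:
  assumes S: "Lindelof_in X S" and nbhd: "\<And>x. x \<in> S \<Longrightarrow> has_Lindelof_nbhd X x"
  obtains V L where "openin X V" "S \<subseteq> V" "V \<subseteq> L" "Lindelof_in X L"
proof -
  obtain G L where GL: "\<And>x. x \<in> S \<Longrightarrow> openin X (G x) \<and> x \<in> G x \<and> G x \<subseteq> L x \<and> Lindelof_in X (L x)"
    using nbhd unfolding has_Lindelof_nbhd_def by metis
  then have "S \<subseteq> \<Union>(G ` S)"
    by blast
  then obtain \<G> where \<G>: "countable \<G>" "\<G> \<subseteq> G ` S" "S \<subseteq> \<Union>\<G>"
    using Lindelof_in_countable_subcover[OF S, of "G ` S"] GL by blast
  then obtain T where T: "countable T" "T \<subseteq> S" "\<G> = G ` T"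
    using countable_subset_image by metis
  show ?thesis
  proof (rule that)
    show "openin X (\<Union>(G ` T))"
      using GL T(2) by blast
    show "S \<subseteq> \<Union>(G ` T)"
      using \<G>(3) T(3) by blast
    show "\<Union>(G ` T) \<subseteq> \<Union>(L ` T)"
      using GL T(2) by blast
    show "Lindelof_in X (\<Union>(L ` T))"
      using GL T by (intro Lindelof_in_Union) auto
  qed
qed

lemma non_Lindelof_complement_chain_cover_Un:
  assumes "M \<noteq> {}" and M: "\<And>E. E \<in> M \<Longrightarrow> openin X E \<and> \<not> Lindelof_in X (topspace X - E)"
    and chain: "\<And>A B. A \<in> M \<Longrightarrow> B \<in> M \<Longrightarrow> A \<subseteq> B \<or> B \<subseteq> A"
    and V: "openin X V" "V \<subseteq> L" "Lindelof_in X L" and cover: "\<Union>M \<union> V = topspace X"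
  shows "non_Lindelof_complement_chain_cover X ((\<lambda>E. E \<union> V) ` M)"
proof -
  have "openin X (E \<union> V) \<and> \<not> Lindelof_in X (topspace X - (E \<union> V))" if "E \<in> M" for E
    using M[OF that] V non_Lindelof_complement_Un_Lindelof by blast
  moreover have "A \<union> V \<subseteq> B \<union> V \<or> B \<union> V \<subseteq> A \<union> V" if "A \<in> M" "B \<in> M" for A B
    using chain[OF that] by blast
  moreover have "\<Union>((\<lambda>E. E \<union> V) ` M) = topspace X"
    using \<open>M \<noteq> {}\<close> cover by blast
  ultimately show ?thesis
    unfolding non_Lindelof_complement_chain_cover_def by blast
qed

lemma non_Lindelof_complement_chain_cover_exists:
  assumes nonL: "\<not> Lindelof_space X" and nbhd: "\<And>x. x \<in> topspace X \<Longrightarrow> has_Lindelof_nbhd X x"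
  obtains \<C> where "non_Lindelof_complement_chain_cover X \<C>"
proof -
  define \<P> where "\<P> = {E. openin X E \<and> \<not> Lindelof_in X (topspace X - E)}"
  obtain M where M: "subset.maxchain \<P> M"
    using subset.Hausdorff by blast
  then have "M \<subseteq> \<P>" and chain: "\<And>A B. A \<in> M \<Longrightarrow> B \<in> M \<Longrightarrow> A \<subseteq> B \<or> B \<subseteq> A"
    unfolding subset.maxchain_def subset.chain_def by blast+
  then have MP: "\<And>E. E \<in> M \<Longrightarrow> openin X E \<and> \<not> Lindelof_in X (topspace X - E)"
    unfolding \<P>_def by blast
  have maximal: "\<not> (\<exists>S. subset.chain \<P> S \<and> M \<subset> S)"
    using M unfolding subset.maxchain_def by blast
  have U: "openin X (\<Union>M)"
    using MP by blast
  show ?thesis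
  proof (cases "Lindelof_in X (topspace X - \<Union>M)")
    case True
    have "M \<noteq> {}"
    proof
      assume "M = {}"
      with True nonL show False
        by (simp add: Lindelof_in_topspace)
    qed
    obtain V L where V: "openin X V" "topspace X - \<Union>M \<subseteq> V" "V \<subseteq> L" "Lindelof_in X L"
      using Lindelof_in_open_superset_in_Lindelof[OF True] nbhd by blast
    have "\<Union>M \<union> V = topspace X"
      using V(1,2) U by (auto dest: openin_subset)
    then show ?thesis
      using non_Lindelof_complement_chain_cover_Un[OF \<open>M \<noteq> {}\<close> MP chain V(1,3,4)] that
      by blast
  next
    case False
    have "\<Union>M = topspace X"
    proof (rule ccontr)
      assume "\<Union>M \<noteq> topspace X"
      then obtain x where x: "x \<in> topspace X" "x \<notin> \<Union>M"
        by (meson U openin_subset subsetI subset_antisym)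
      obtain G L where GL: "openin X G" "x \<in> G" "G \<subseteq> L" "Lindelof_in X L"
        using nbhd[OF x(1)] unfolding has_Lindelof_nbhd_def by blast
      have "\<Union>M \<union> G \<in> \<P>"
        using U GL(1) non_Lindelof_complement_Un_Lindelof[OF U False GL(4,3)]
        unfolding \<P>_def by (simp add: openin_Un)
      then have "subset.chain \<P> (insert (\<Union>M \<union> G) M)"
        using \<open>M \<subseteq> \<P>\<close> chain unfolding subset.chain_def by blast
      moreover have "M \<subset> insert (\<Union>M \<union> G) M"
        using x GL(2) by (auto simp: psubset_insert_iff)
      ultimately show False
        using maximal by meson
    qed
    moreover have "\<forall>E\<in>M. openin X E \<and> \<not> Lindelof_in X (topspace X - E)"
      using MP by blast
    moreover have "\<forall>A\<in>M. \<forall>B\<in>M. A \<subseteq> B \<or> B \<subseteq> A"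
      using chain by blast
    ultimately have "non_Lindelof_complement_chain_cover X M"
      unfolding non_Lindelof_complement_chain_cover_def by blast
    then show ?thesis
      by (rule that)
  qed
qed

lemma essential_value_exists:
  assumes P: "non_Lindelof_closed_countable_Inter X" and nonL: "\<not> Lindelof_space X"
    and f: "continuous_map X Y f" and X: "linear_cover_bound X K"
    and Y: "aleph0_kappa_compact Y K"
  obtains y where "essential_value X Y f y"
proof (cases "\<forall>x\<in>topspace X. has_Lindelof_nbhd X x")
  case True
  then obtain \<C> where \<C>: "non_Lindelof_complement_chain_cover X \<C>"
    using non_Lindelof_complement_chain_cover_exists[OF nonL] by blast
  then have "(\<forall>U\<in>\<C>. openin X U) \<and> \<Union>\<C> = topspace X \<and> (\<forall>A\<in>\<C>. \<forall>B\<in>\<C>. A \<subseteq> B \<or> B \<subseteq> A)"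
    unfolding non_Lindelof_complement_chain_cover_def by auto
  then have "\<exists>\<V>. \<V> \<subseteq> \<C> \<and> \<Union>\<V> = topspace X \<and> \<V> \<lesssim> K"
    using X[unfolded linear_cover_bound_def, THEN spec[where x=\<C>]] by (rule rev_mp)
  then obtain \<V> where "\<V> \<subseteq> \<C>" "\<Union>\<V> = topspace X" "\<V> \<lesssim> K"
    by blast
  have \<V>: "non_Lindelof_complement_chain_cover X \<V>"
    using \<C> \<open>\<V> \<subseteq> \<C>\<close> \<open>\<Union>\<V> = topspace X\<close> by (rule non_Lindelof_complement_chain_cover_subset)
  then obtain y where "y \<in> topspace Y" "\<forall>E\<in>\<V>. y \<in> Y closure_of (f ` (topspace X - E))"
    using common_closure_point_of_images_of_complements[OF P nonL
        non_Lindelof_complement_chain_coverD(1)[OF \<V>] f \<open>\<V> \<lesssim> K\<close> Y]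
    by blast
  then show ?thesis
    using essential_value_common_closure_point[OF P nonL \<V> f] that by blast
next
  case False
  then show ?thesis
    using essential_value_image_of_point_without_Lindelof_nbhd[OF f] that by blast
qed

theorem theorem3p12:
  fixes X :: "'a topology" and Y :: "'b topology" and K :: "'k set"
  assumes "Hausdorff_space X" and "Hausdorff_space Y"
    and "\<And>\<F>. countable \<F> \<Longrightarrow> \<F> \<noteq> {} \<Longrightarrow>
           (\<forall>F\<in>\<F>. closedin X F \<and> \<not> Lindelof_in X F) \<Longrightarrow>
           \<not> Lindelof_in X (\<Inter>\<F>)"
    and "is_linear_Lindelof_number X K"
    and "regular_space Y" and "aleph0_kappa_compact Y K" and "G_delta_points Y"
  shows "EC X Y"
  unfolding EC_def
proof (intro impI allI)
  assume nonL: "\<not> Lindelof_space X"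
  fix f assume f: "continuous_map X Y f"
  have P: "non_Lindelof_closed_countable_Inter X"
    using assms(3) unfolding non_Lindelof_closed_countable_Inter_def by blast
  have "linear_cover_bound X K"
    using assms(4) unfolding is_linear_Lindelof_number_def by blast
  then obtain y where y: "essential_value X Y f y"
    using essential_value_exists[OF P nonL f _ assms(6)] by blast
  then have "gdelta_in Y {y}"
    using assms(7) unfolding G_delta_points_def essential_value_def by blast
  then show "\<exists>Z. Lindelof_in X Z \<and> (\<exists>y. f ` (topspace X - Z) = {y})"
    using essential_value_constant_off_Lindelof[OF P assms(5) _ f nonL y] by blast
qed

end
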